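(* Let $E_1$ and $E_2$ be vector lattices with the countable sup property. Consider $E_1\times E_2$ with either the coordinatewise order ($(x_1,y_1)\le(x_2,y_2)$ iff $x_1\le x_2$ and $y_1\le y_2$) or the lexicographic order ($(x_1,y_1)\preceq(x_2,y_2)$ iff $x_1<x_2$, or $x_1=x_2$ and $y_1\le y_2$). With respect to either order, $E_1\times E_2$ has the countable sup property, in the sense that whenever $(z_\alpha)$ is an increasing net with $0\le z_\alpha\uparrow z$ (i.e. $z$ is the supremum of the net), there is an increasing sequence of indices $(\alpha_n)$ with $0\le z_{\alpha_n}\uparrow z$.
   Context: A vector lattice $E$ has the countable sup property if for every net with $0\le x_\alpha\uparrow x$ in $E$ there is an increasing sequence of indices $\alpha_n$ with $0\le x_{\alpha_n}\uparrow x$ (equivalently, every nonempty subset possessing a supremum contains a countable subset with the same supremum). *)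

theory Defs
  imports Complex_Main "HOL-Library.Countable_Set"
begin

text \<open>A vector lattice (Riesz space) is an ordered real vector space whose order is a lattice.
  We use the type class combination \<open>{ordered_real_vector, lattice}\<close>.\<close>

definition is_sup_rel :: "('b \<Rightarrow> 'b \<Rightarrow> bool) \<Rightarrow> 'b set \<Rightarrow> 'b \<Rightarrow> bool" where
  "is_sup_rel le S s \<longleftrightarrow> (\<forall>x\<in>S. le x s) \<and> (\<forall>u. (\<forall>x\<in>S. le x u) \<longrightarrow> le s u)"

definition directed_set :: "'i set \<Rightarrow> ('i \<Rightarrow> 'i \<Rightarrow> bool) \<Rightarrow> bool" where
  "directed_set I R \<longleftrightarrow> I \<noteq> {} \<and> (\<forall>a\<in>I. R a a) \<and>
     (\<forall>a\<in>I. \<forall>b\<in>I. \<forall>c\<in>I. R a b \<longrightarrow> R b c \<longrightarrow> R a c) \<and>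
     (\<forall>a\<in>I. \<forall>b\<in>I. \<exists>c\<in>I. R a c \<and> R b c)"

definition csp_nets :: "'i itself \<Rightarrow> ('b \<Rightarrow> 'b \<Rightarrow> bool) \<Rightarrow> 'b \<Rightarrow> bool" where
  "csp_nets _ le z0 \<longleftrightarrow>
     (\<forall>(I::'i set) R (x::'i \<Rightarrow> 'b) s.
        directed_set I R \<and>
        (\<forall>a\<in>I. \<forall>b\<in>I. R a b \<longrightarrow> le (x a) (x b)) \<and>
        (\<forall>a\<in>I. le z0 (x a)) \<and>
        is_sup_rel le (x ` I) s
        \<longrightarrow> (\<exists>\<alpha>::nat \<Rightarrow> 'i. (\<forall>n. \<alpha> n \<in> I) \<and> (\<forall>n. R (\<alpha> n) (\<alpha> (Suc n))) \<and>
               (\<forall>n. le z0 (x (\<alpha> n))) \<and> (\<forall>n. le (x (\<alpha> n)) (x (\<alpha> (Suc n)))) \<and>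
               is_sup_rel le (range (x \<circ> \<alpha>)) s))"

text \<open>Countable sup property, set version (the equivalent formulation given in the context):
  every nonempty subset possessing a supremum contains a countable subset with the same
  supremum. Used for the hypotheses on \<open>E\<^sub>1, E\<^sub>2\<close>.\<close>
definition csp_sets :: "('b \<Rightarrow> 'b \<Rightarrow> bool) \<Rightarrow> bool" where
  "csp_sets le \<longleftrightarrow>
     (\<forall>S s. S \<noteq> {} \<and> is_sup_rel le S s \<longrightarrow> (\<exists>C\<subseteq>S. countable C \<and> is_sup_rel le C s))"

definition coord_le :: "('a::order \<times> 'b::order) \<Rightarrow> ('a \<times> 'b) \<Rightarrow> bool" where
  "coord_le p q \<longleftrightarrow> fst p \<le> fst q \<and> snd p \<le> snd q"

definition lex_le :: "('a::order \<times> 'b::order) \<Rightarrow> ('a \<times> 'b) \<Rightarrow> bool" where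
  "lex_le p q \<longleftrightarrow> fst p < fst q \<or> (fst p = fst q \<and> snd p \<le> snd q)"

end

theory Submission
  imports Defs
begin

text \<open>For both product orders the set form of the countable sup property is inherited from
  the factors: coordinatewise suprema are computed componentwise, while a lexicographic supremum
  \<open>s\<close> is either attained in the first coordinate (and then determined by the second coordinates
  of the elements sitting over \<open>fst s\<close>) or not attained (and then \<open>fst s\<close> is the supremum of the
  first coordinates; this needs the density of a vector lattice). The net form follows from the
  set form for any transitive order: given countably many indices whose values have supremum
  \<open>s\<close>, an increasing sequence of indices dominating all of them yields \<open>x\<^sub>\<alpha>\<^sub>n \<up> s\<close>.\<close>

lemma directed_set_increasing_chain_above:
  assumes dir: "directed_set I R" and a: "range a \<subseteq> I"
  obtains \<alpha> where "range \<alpha> \<subseteq> I" "\<And>n. R (\<alpha> n) (\<alpha> (Suc n))" "\<And>n. R (a n) (\<alpha> n)"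
proof -
  have "\<forall>p\<in>I. \<forall>q\<in>I. \<exists>c. c \<in> I \<and> R p c \<and> R q c"
    using dir unfolding directed_set_def by blast
  then obtain ub where ub: "\<And>p q. p \<in> I \<Longrightarrow> q \<in> I \<Longrightarrow> ub p q \<in> I \<and> R p (ub p q) \<and> R q (ub p q)"
    by metis
  define \<alpha> where "\<alpha> = rec_nat (a 0) (\<lambda>n p. ub p (a (Suc n)))"
  have \<alpha>_0: "\<alpha> 0 = a 0" and \<alpha>_Suc: "\<alpha> (Suc n) = ub (\<alpha> n) (a (Suc n))" for n
    by (simp_all add: \<alpha>_def)
  have \<alpha>_in: "\<alpha> n \<in> I" for n
    by (induction n) (use a ub in \<open>auto simp: \<alpha>_0 \<alpha>_Suc\<close>)
  show ?thesis
  proof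
    show "range \<alpha> \<subseteq> I" using \<alpha>_in by blast
    show "R (\<alpha> n) (\<alpha> (Suc n))" for n using ub[OF \<alpha>_in, of "a (Suc n)"] a by (auto simp: \<alpha>_Suc)
    show "R (a n) (\<alpha> n)" for n
    proof (cases n)
      case 0
      then show ?thesis using dir a unfolding directed_set_def by (auto simp: \<alpha>_0)
    next
      case (Suc m)
      then show ?thesis using ub[OF \<alpha>_in, of "a n"] a by (auto simp: \<alpha>_Suc)
    qed
  qed
qed

lemma is_sup_rel_between:
  assumes "C \<subseteq> T" "T \<subseteq> S" "is_sup_rel le C s" "is_sup_rel le S s"
  shows "is_sup_rel le T s"
  using assms unfolding is_sup_rel_def by blast

lemma csp_setsE_image:
  assumes "csp_sets le" "S \<noteq> {}" "is_sup_rel le (f ` S) s"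
  obtains D where "countable D" "D \<subseteq> S" "is_sup_rel le (f ` D) s"
proof -
  have "f ` S \<noteq> {}" using assms(2) by simp
  then obtain C where "C \<subseteq> f ` S" "countable C" "is_sup_rel le C s"
    using assms(1)[unfolded csp_sets_def, rule_format, OF conjI[OF _ assms(3)]] by blast
  then show ?thesis using that by (metis countable_subset_image)
qed

lemma csp_nets_if_csp_sets:
  assumes trans: "transp le" and csp: "csp_sets le"
  shows "csp_nets TYPE('i) le z0"
  unfolding csp_nets_def
proof (intro allI impI, elim conjE)
  fix I :: "'i set" and R x s
  assume dir: "directed_set I R" and mono: "\<forall>a\<in>I. \<forall>b\<in>I. R a b \<longrightarrow> le (x a) (x b)"
    and pos: "\<forall>a\<in>I. le z0 (x a)" and sup: "is_sup_rel le (x ` I) s"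
  obtain i0 where i0: "i0 \<in> I" using dir unfolding directed_set_def by blast
  then obtain J where J: "countable J" "J \<subseteq> I" "is_sup_rel le (x ` J) s"
    using csp_setsE_image[OF csp _ sup] by blast
  \<comment> \<open>\<open>J\<close> may be empty, and \<open>from_nat_into\<close> only enumerates nonempty sets\<close>
  define a where "a = from_nat_into (insert i0 J)"
  have range_a: "range a = insert i0 J" using J(1) unfolding a_def by simp
  have a_in: "a n \<in> I" for n
  proof -
    have "a n \<in> insert i0 J" unfolding range_a[symmetric] by (rule rangeI)
    then show ?thesis using i0 J(2) by blast
  qed
  obtain \<alpha> where \<alpha>: "range \<alpha> \<subseteq> I" "\<And>n. R (\<alpha> n) (\<alpha> (Suc n))" "\<And>n. R (a n) (\<alpha> n)"
    using directed_set_increasing_chain_above[OF dir] a_in by blast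
  have \<alpha>_in: "\<alpha> n \<in> I" for n using \<alpha>(1) by blast
  have "is_sup_rel le (range (x \<circ> \<alpha>)) s"
    unfolding is_sup_rel_def
  proof (intro conjI ballI allI impI)
    show "le y s" if "y \<in> range (x \<circ> \<alpha>)" for y
      using that \<alpha>_in sup unfolding is_sup_rel_def by auto
  next
    fix u assume u: "\<forall>y\<in>range (x \<circ> \<alpha>). le y u"
    have "le (x j) u" if "j \<in> J" for j
    proof -
      have "j \<in> range a" using that range_a by blast
      then obtain n where n: "j = a n" by blast
      have "le (x (a n)) (x (\<alpha> n))" using mono a_in \<alpha>_in \<alpha>(3) by blast
      then show ?thesis using n u transpD[OF trans] by auto
    qed
    then show "le s u" using J(3) unfolding is_sup_rel_def by blast
  qed
  then show "\<exists>\<alpha>::nat \<Rightarrow> 'i. (\<forall>n. \<alpha> n \<in> I) \<and> (\<forall>n. R (\<alpha> n) (\<alpha> (Suc n))) \<and>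
      (\<forall>n. le z0 (x (\<alpha> n))) \<and> (\<forall>n. le (x (\<alpha> n)) (x (\<alpha> (Suc n)))) \<and>
      is_sup_rel le (range (x \<circ> \<alpha>)) s"
    using \<alpha>_in \<alpha>(2) mono pos by (intro exI[of _ \<alpha>]) blast
qed

lemma transp_coord_le: "transp coord_le"
  unfolding coord_le_def by (rule transpI) (meson order_trans)

lemma is_sup_rel_coord_le_iff:
  "is_sup_rel coord_le S s \<longleftrightarrow>
     is_sup_rel (\<le>) (fst ` S) (fst s) \<and> is_sup_rel (\<le>) (snd ` S) (snd s)"
  unfolding is_sup_rel_def coord_le_def by fastforce

lemma csp_sets_coord_le:
  assumes csp1: "csp_sets ((\<le>) :: 'a::order \<Rightarrow> 'a \<Rightarrow> bool)"
    and csp2: "csp_sets ((\<le>) :: 'b::order \<Rightarrow> 'b \<Rightarrow> bool)"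
  shows "csp_sets (coord_le :: 'a \<times> 'b \<Rightarrow> 'a \<times> 'b \<Rightarrow> bool)"
  unfolding csp_sets_def
proof (intro allI impI, elim conjE)
  fix S :: "('a \<times> 'b) set" and s
  assume ne: "S \<noteq> {}" and "is_sup_rel coord_le S s"
  then have sup1: "is_sup_rel (\<le>) (fst ` S) (fst s)" and sup2: "is_sup_rel (\<le>) (snd ` S) (snd s)"
    by (simp_all add: is_sup_rel_coord_le_iff)
  obtain D1 where D1: "countable D1" "D1 \<subseteq> S" "is_sup_rel (\<le>) (fst ` D1) (fst s)"
    using csp_setsE_image[OF csp1 ne sup1] .
  obtain D2 where D2: "countable D2" "D2 \<subseteq> S" "is_sup_rel (\<le>) (snd ` D2) (snd s)"
    using csp_setsE_image[OF csp2 ne sup2] .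
  have "is_sup_rel (\<le>) (fst ` (D1 \<union> D2)) (fst s)" "is_sup_rel (\<le>) (snd ` (D1 \<union> D2)) (snd s)"
    using is_sup_rel_between[of _ _ "fst ` S"] is_sup_rel_between[of _ _ "snd ` S"]
      D1 D2 sup1 sup2 by (meson image_mono sup.cobounded1 sup.cobounded2 Un_least)+
  then show "\<exists>C\<subseteq>S. countable C \<and> is_sup_rel coord_le C s"
    using D1 D2 by (intro exI[of _ "D1 \<union> D2"]) (simp add: is_sup_rel_coord_le_iff)
qed

lemma lex_le_fst: "lex_le p q \<Longrightarrow> fst p \<le> fst q"
  unfolding lex_le_def by auto

lemma transp_lex_le: "transp lex_le"
  unfolding lex_le_def by (rule transpI) (auto intro: less_trans order_trans)

lemma ordered_real_vector_dense:
  fixes w t :: "'a::ordered_real_vector"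
  assumes "w < t"
  shows "\<exists>m. w < m \<and> m < t"
proof -
  define h where "h = (1/2::real) *\<^sub>R (t - w)"
  have "0 \<le> h" "h \<noteq> 0" using assms unfolding h_def by (auto simp: scaleR_nonneg_nonneg)
  then have "w < w + h" "t - h < t" by (simp_all add: order_le_neq_trans)
  moreover have "w + h = t - h"
    unfolding h_def by (simp add: algebra_simps flip: scaleR_left_distrib)
  ultimately show ?thesis by metis
qed

lemma is_sup_rel_lex_le_fst_attained:
  assumes sup: "is_sup_rel lex_le S s"
  shows "is_sup_rel (\<le>) (snd ` {p\<in>S. fst p = fst s}) (snd s)"
  unfolding is_sup_rel_def
proof (intro conjI ballI allI impI)
  show "y \<le> snd s" if "y \<in> snd ` {p\<in>S. fst p = fst s}" for y
    using that sup unfolding is_sup_rel_def lex_le_def by auto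
next
  fix u assume u: "\<forall>y\<in>snd ` {p\<in>S. fst p = fst s}. y \<le> u"
  have "lex_le p (fst s, u)" if "p \<in> S" for p
  proof (cases "fst p = fst s")
    case True
    then have "snd p \<le> u" using u that by blast
    then show ?thesis using True unfolding lex_le_def by simp
  next
    case False
    then show ?thesis using that sup unfolding is_sup_rel_def lex_le_def by auto
  qed
  then show "snd s \<le> u" using sup unfolding is_sup_rel_def lex_le_def by fastforce
qed

lemma is_sup_rel_lex_le_fst_const:
  assumes ne: "D \<noteq> {}" and fst_eq: "\<forall>p\<in>D. fst p = fst s"
    and sup_snd: "is_sup_rel (\<le>) (snd ` D) (snd s)"
  shows "is_sup_rel lex_le D s"
  unfolding is_sup_rel_def
proof (intro conjI ballI allI impI)
  show "lex_le p s" if "p \<in> D" for p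
    using that fst_eq sup_snd unfolding is_sup_rel_def lex_le_def by auto
next
  fix u assume u: "\<forall>p\<in>D. lex_le p u"
  obtain p0 where "p0 \<in> D" using ne by blast
  then have fst_le: "fst s \<le> fst u" using u fst_eq by (metis lex_le_fst)
  show "lex_le s u"
  proof (cases "fst s < fst u")
    case True
    then show ?thesis unfolding lex_le_def by simp
  next
    case False
    with fst_le have eq: "fst u = fst s" by simp
    have "\<forall>y\<in>snd ` D. y \<le> snd u" using u fst_eq eq unfolding lex_le_def by auto
    then have "snd s \<le> snd u" using sup_snd unfolding is_sup_rel_def by blast
    then show ?thesis using eq unfolding lex_le_def by simp
  qed
qed

lemma is_sup_rel_lex_le_fst_not_attained:
  fixes S :: "('a::{ordered_real_vector, lattice} \<times> 'b::order) set"
  assumes sup: "is_sup_rel lex_le S s" and below: "\<forall>p\<in>S. fst p < fst s"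
  shows "is_sup_rel (\<le>) (fst ` S) (fst s)"
  unfolding is_sup_rel_def
proof (intro conjI ballI allI impI)
  show "y \<le> fst s" if "y \<in> fst ` S" for y
    using that below by auto
next
  fix u assume u: "\<forall>y\<in>fst ` S. y \<le> u"
  show "fst s \<le> u"
  proof (rule ccontr)
    assume "\<not> fst s \<le> u"
    then have "inf u (fst s) \<noteq> fst s" by (metis inf.absorb_iff2)
    then have "inf u (fst s) < fst s" by (simp add: less_le)
    then obtain m where m: "inf u (fst s) < m" "m < fst s" using ordered_real_vector_dense by blast
    have "lex_le p (m, snd s)" if "p \<in> S" for p
    proof -
      have "fst p \<le> inf u (fst s)" using that u below by (simp add: less_imp_le)
      then have "fst p < m" using m(1) by (rule le_less_trans)
      then show ?thesis unfolding lex_le_def by simp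
    qed
    then have "lex_le s (m, snd s)" using sup unfolding is_sup_rel_def by blast
    then have "fst s \<le> m" by (auto dest: lex_le_fst)
    then show False using m(2) by simp
  qed
qed

lemma is_sup_rel_lex_le_subset_fst:
  assumes sup: "is_sup_rel lex_le S s" and "D \<subseteq> S" and below: "\<forall>p\<in>S. fst p < fst s"
    and sup_fst: "is_sup_rel (\<le>) (fst ` D) (fst s)"
  shows "is_sup_rel lex_le D s"
  unfolding is_sup_rel_def
proof (intro conjI ballI allI impI)
  show "lex_le p s" if "p \<in> D" for p
    using that \<open>D \<subseteq> S\<close> sup unfolding is_sup_rel_def by auto
next
  fix u assume u: "\<forall>p\<in>D. lex_le p u"
  then have "\<forall>y\<in>fst ` D. y \<le> fst u" by (auto dest: lex_le_fst)
  then have fst_le: "fst s \<le> fst u" using sup_fst unfolding is_sup_rel_def by blast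
  have "\<forall>p\<in>S. lex_le p (fst s, snd u)" using below unfolding lex_le_def by auto
  then have "snd s \<le> snd u" using sup unfolding is_sup_rel_def lex_le_def by fastforce
  then show "lex_le s u" using fst_le unfolding lex_le_def by (auto simp: le_less)
qed

lemma csp_sets_lex_le:
  assumes csp1: "csp_sets ((\<le>) :: 'a::{ordered_real_vector, lattice} \<Rightarrow> 'a \<Rightarrow> bool)"
    and csp2: "csp_sets ((\<le>) :: 'b::order \<Rightarrow> 'b \<Rightarrow> bool)"
  shows "csp_sets (lex_le :: 'a \<times> 'b \<Rightarrow> 'a \<times> 'b \<Rightarrow> bool)"
  unfolding csp_sets_def
proof (intro allI impI, elim conjE)
  fix S :: "('a \<times> 'b) set" and s
  assume ne: "S \<noteq> {}" and sup: "is_sup_rel lex_le S s"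
  show "\<exists>C\<subseteq>S. countable C \<and> is_sup_rel lex_le C s"
  proof (cases "\<exists>p\<in>S. fst p = fst s")
    case True
    then obtain p0 where p0: "p0 \<in> S" "fst p0 = fst s" by blast
    define T where "T = {p\<in>S. fst p = fst s}"
    have sup_T: "is_sup_rel (\<le>) (snd ` T) (snd s)"
      unfolding T_def by (rule is_sup_rel_lex_le_fst_attained[OF sup])
    obtain D where D: "countable D" "D \<subseteq> T" "is_sup_rel (\<le>) (snd ` D) (snd s)"
      using csp_setsE_image[OF csp2 _ sup_T] p0 unfolding T_def by blast
    \<comment> \<open>\<open>p0\<close> pins the first coordinate of the upper bounds even if \<open>D\<close> is empty\<close>
    have "p0 \<in> T" using p0 unfolding T_def by blast
    have "is_sup_rel (\<le>) (snd ` insert p0 D) (snd s)"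
      by (rule is_sup_rel_between[OF _ _ D(3) sup_T]) (use D(2) \<open>p0 \<in> T\<close> in blast)+
    then have "is_sup_rel lex_le (insert p0 D) s"
      using D(2) p0 by (intro is_sup_rel_lex_le_fst_const) (auto simp: T_def)
    then show ?thesis using D p0 unfolding T_def by (intro exI[of _ "insert p0 D"]) auto
  next
    case False
    have "\<forall>p\<in>S. fst p \<le> fst s" using sup unfolding is_sup_rel_def by (auto dest: lex_le_fst)
    with False have below: "\<forall>p\<in>S. fst p < fst s" by (auto simp: less_le)
    obtain D where D: "countable D" "D \<subseteq> S" "is_sup_rel (\<le>) (fst ` D) (fst s)"
      using csp_setsE_image[OF csp1 ne is_sup_rel_lex_le_fst_not_attained[OF sup below]] .
    then show ?thesis using is_sup_rel_lex_le_subset_fst[OF sup D(2) below D(3)] by blast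
  qed
qed

theorem proposition6p1:
  fixes E1 :: "'a::{ordered_real_vector, lattice} itself"
    and E2 :: "'b::{ordered_real_vector, lattice} itself"
  assumes "csp_sets ((\<le>) :: 'a \<Rightarrow> 'a \<Rightarrow> bool)"
    and "csp_sets ((\<le>) :: 'b \<Rightarrow> 'b \<Rightarrow> bool)"
  shows "csp_nets TYPE('i) (coord_le :: 'a \<times> 'b \<Rightarrow> 'a \<times> 'b \<Rightarrow> bool) (0, 0)
       \<and> csp_nets TYPE('i) (lex_le :: 'a \<times> 'b \<Rightarrow> 'a \<times> 'b \<Rightarrow> bool) (0, 0)"
  using csp_nets_if_csp_sets[OF transp_coord_le csp_sets_coord_le[OF assms]]
    csp_nets_if_csp_sets[OF transp_lex_le csp_sets_lex_le[OF assms]]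
  by blast

end
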